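(* Let $k\geq2$ be even. If the word $a_k$ followed by $a_k$ overlap at shift $s$ with $0<s<\ell_k$, then $s\geq(N_k-1)\ell_{k-1}$; that is, two copies of $a_k$ can only overlap with the initial segment $a_{k-1}$ of one copy overlapping the terminal segment $a_{k-1}$ of the other.
   Context: Alphabet $\{0,1,2\}$. Let $(N_k)_{k\geq1}$ be integers with $N_k\geq4$, $\ell_0=2$, $\ell_k=N_k\ell_{k-1}$. Words: $a_0=01$; for odd $k\geq1$, $a_k=(a_{k-1})^{N_k}$ (concatenation of $N_k$ copies); for even $k\geq2$, $a_k=a_{k-1}1^{(N_k-2)\ell_{k-1}}a_{k-1}$. Two words $u,v$ of the same length $\ell$ overlap with $u$ followed by $v$ at shift $s$ ($0<s<\ell$) if the terminal segment of length $\ell-s$ of $u$ equals the initial segment of length $\ell-s$ of $v$. *)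

theory Defs
  imports Main
begin

text \<open>Words over the alphabet {0,1,2} are represented as lists of naturals.
  The sequence (N k) for k \<ge> 1 is a function N :: nat \<Rightarrow> nat (value at 0 unused).\<close>

fun ell :: "(nat \<Rightarrow> nat) \<Rightarrow> nat \<Rightarrow> nat" where
  "ell N 0 = 2"
| "ell N (Suc k) = N (Suc k) * ell N k"

fun aw :: "(nat \<Rightarrow> nat) \<Rightarrow> nat \<Rightarrow> nat list" where
  "aw N 0 = [0, 1]"
| "aw N (Suc k) =
     (if odd (Suc k) then concat (replicate (N (Suc k)) (aw N k))
      else aw N k @ replicate ((N (Suc k) - 2) * ell N k) 1 @ aw N k)"

definition overlap_at :: "'a list \<Rightarrow> 'a list \<Rightarrow> nat \<Rightarrow> bool" where
  "overlap_at u v s \<longleftrightarrow> length u = length v \<and> 0 < s \<and> s < length u \<and>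
     drop s u = take (length u - s) v"

end

theory Submission
  imports Defs
begin

text \<open>For even \<open>k\<close> the word \<open>a\<^sub>k = u 1\<^sup>m u\<close> with \<open>u = a\<^sub>k\<^sub>-\<^sub>1\<close> and
  \<open>m = (N\<^sub>k - 2)\<ell>\<^sub>k\<^sub>-\<^sub>1 \<ge> |u|\<close>, and \<open>u\<close> begins with the letter 0.
  A self-overlap at a shift \<open>s < |u| + m\<close> would put a letter of \<open>a\<^sub>k\<close> at
  position \<open>s\<close> equal to its first letter 0, forcing \<open>s < |u|\<close>; but then the
  first letter 0 of the second copy of \<open>u\<close> is matched against a letter
  inside the block \<open>1\<^sup>m\<close>.\<close>

lemma overlap_at_nth:
  assumes "overlap_at w w s" and "i < length w - s"
  shows "w ! (s + i) = w ! i"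
proof -
  have "drop s w ! i = take (length w - s) w ! i"
    using assms(1) by (simp add: overlap_at_def)
  then show ?thesis using assms(2) by simp
qed

lemma overlap_at_block_shift_ge:
  assumes ov: "overlap_at w w s"
    and w: "w = u @ replicate m c @ u"
    and u: "u \<noteq> []" "hd u \<noteq> c" "length u \<le> m"
  shows "length u + m \<le> s"
proof (rule ccontr)
  assume "\<not> length u + m \<le> s"
  then have s_lt: "s < length u + m" by simp
  have s_pos: "0 < s" using ov by (simp add: overlap_at_def)
  have block: "w ! i = c" if "length u \<le> i" "i < length u + m" for i
    using that w by (auto simp: nth_append)
  have w0: "w ! 0 = hd u" using u(1) w by (simp add: hd_conv_nth nth_append)
  have "w ! s = w ! 0" using overlap_at_nth[OF ov, of 0] s_lt w by simp
  then have s_short: "s < length u"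
    using block s_lt u(2) w0 by (metis not_le)
  define i where "i = length u + m - s"
  have "w ! (s + i) = hd u"
    using s_short u(1) w by (simp add: i_def nth_append hd_conv_nth)
  moreover have "w ! i = c"
    using block s_short s_pos u(3) by (simp add: i_def)
  moreover have "i < length w - s"
    using s_short u(1) w by (simp add: i_def)
  ultimately show False using overlap_at_nth[OF ov] u(2) by metis
qed

lemma length_aw:
  assumes "\<And>j. j \<ge> 1 \<Longrightarrow> N j \<ge> 2"
  shows "length (aw N k) = ell N k"
proof (induction k)
  case 0 then show ?case by simp
next
  case (Suc k)
  have "N (Suc k) \<ge> 2" using assms by simp
  then show ?case using Suc
    by (auto simp: length_concat sum_list_replicate algebra_simps left_diff_distrib)
qed

lemma aw_Cons_0:
  assumes "\<And>j. j \<ge> 1 \<Longrightarrow> N j \<ge> 1"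
  shows "\<exists>t. aw N k = 0 # t"
proof (induction k)
  case 0 then show ?case by simp
next
  case (Suc k)
  then obtain t where t: "aw N k = 0 # t" by blast
  obtain r where "N (Suc k) = Suc r" using assms[of "Suc k"] by (cases "N (Suc k)") auto
  then show ?case using t by auto
qed

theorem lemma3p3:
  fixes N :: "nat \<Rightarrow> nat" and k s :: nat
  assumes "\<And>j. j \<ge> 1 \<Longrightarrow> N j \<ge> 4"
    and "k \<ge> 2" and "even k"
    and "0 < s" and "s < ell N k"
    and "overlap_at (aw N k) (aw N k) s"
  shows "s \<ge> (N k - 1) * ell N (k - 1)"
proof -
  obtain j where k: "k = Suc j" using assms(2) by (cases k) auto
  define m where "m = (N k - 2) * ell N j"
  have Nk: "N k \<ge> 4" using assms(1) k by simp
  have len: "length (aw N j) = ell N j"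
    by (rule length_aw) (use assms(1) in force)
  obtain t where t: "aw N j = 0 # t"
    using aw_Cons_0[of N j] assms(1) by force
  have "length (aw N j) \<le> m" using Nk len by (auto simp: m_def)
  moreover have "aw N k = aw N j @ replicate m 1 @ aw N j"
    using assms(3) k by (simp add: m_def)
  ultimately have "length (aw N j) + m \<le> s"
    using overlap_at_block_shift_ge[OF assms(6), of "aw N j" m 1] t by simp
  moreover have "(N k - 1) * ell N (k - 1) = length (aw N j) + m"
    using Nk len k by (simp add: m_def algebra_simps left_diff_distrib)
  ultimately show ?thesis by simp
qed

end
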